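(* Let $\alpha>0$ and let $\mu$ be a positive Borel measure on $\mathbb{C}^+$ which is a sampling measure for $\mathcal{A}_\alpha(\mathbb{C}^+)$ with constants $A,B>0$, i.e. $$A\|F\|_{\mathcal{A}_\alpha}^2\le\int_{\mathbb{C}^+}|F(z)|^2 s^{\alpha}\,d\mu(z)\le B\|F\|_{\mathcal{A}_\alpha}^2\quad\text{for all }F\in\mathcal{A}_\alpha(\mathbb{C}^+),$$ where $z=x+is$. If $R\in(0,1)$ and $\mu(\mathcal{D}_R(z))=0$ for some $z\in\mathbb{C}^+$, then $$R\le 1-\left(\frac{1}{4^{\alpha+1}\pi}\,\frac{A}{B}\right)^{1/\alpha}.$$
   Context: $\mathbb{C}^+=\{x+is:x\in\mathbb{R},s>0\}$. $\mathcal{A}_\alpha(\mathbb{C}^+)$ is the weighted Bergman space of holomorphic functions $F$ on $\mathbb{C}^+$ with $\|F\|_{\mathcal{A}_\alpha}^2=\int_{\mathbb{C}^+}|F(x+is)|^2 s^\alpha\,dx\,ds<\infty$. The pseudohyperbolic metric is $\rho(z,w)=\left|\frac{z-w}{z-\overline{w}}\right|$ and $\mathcal{D}_R(z)=\{w\in\mathbb{C}^+:\rho(z,w)<R\}$. *)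

theory Defs
  imports "HOL-Complex_Analysis.Complex_Analysis"
begin

definition upper_half_plane :: "complex set" where
  "upper_half_plane = {z. Im z > 0}"

definition pseudohyp :: "complex \<Rightarrow> complex \<Rightarrow> real" where
  "pseudohyp z w = cmod ((z - w) / (z - cnj w))"

definition pdisc :: "real \<Rightarrow> complex \<Rightarrow> complex set" where
  "pdisc R z = {w \<in> upper_half_plane. pseudohyp z w < R}"

definition bergman_norm2 :: "real \<Rightarrow> (complex \<Rightarrow> complex) \<Rightarrow> ennreal" where
  "bergman_norm2 \<alpha> F =
     (\<integral>\<^sup>+ w \<in> upper_half_plane. ennreal ((cmod (F w))\<^sup>2 * Im w powr \<alpha>) \<partial>lborel)"

definition bergman_space :: "real \<Rightarrow> (complex \<Rightarrow> complex) set" where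
  "bergman_space \<alpha> = {F. F holomorphic_on upper_half_plane \<and> bergman_norm2 \<alpha> F < \<infinity>}"

definition weighted_mu_integral :: "complex measure \<Rightarrow> real \<Rightarrow> (complex \<Rightarrow> complex) \<Rightarrow> ennreal" where
  "weighted_mu_integral \<mu> \<alpha> F =
     (\<integral>\<^sup>+ w \<in> upper_half_plane. ennreal ((cmod (F w))\<^sup>2 * Im w powr \<alpha>) \<partial>\<mu>)"

end

(*
  Let b = Im z, phi(w) = (w - z) / (w - cnj z), so that rho(z, w) = |phi(w)|, and
  G(w) = (w - cnj z) powr (-(alpha + 2)).  As mu does not charge D_R(z), |phi| >= R holds
  mu-almost everywhere, so the sampling inequalities for F_n = phi^n G give
  R^(2n) A |G|^2 <= B |F_n|^2.  Weighting these by the coefficients c_n of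
  (1 - t) powr (-alpha) = sum c_n t^n and summing turns the left side into
  (1 - R^2) powr (-alpha) A |G|^2.  On the right, 1 - |phi(w)|^2 = 4 s b / |w - cnj z|^2
  makes sum c_n |F_n(w)|^2 s^alpha collapse to (4 b) powr (-alpha) / |w - cnj z|^4, whose
  integral over the half plane is at most pi / (4 powr (alpha + 1) b powr (alpha + 2)).
  An elementary lower bound for |G|^2 then gives A/B <= pi (alpha + 1) (5/4) powr (alpha + 2)
  (1 - R^2) powr alpha, and 1 - R^2 <= 2 (1 - R) together with
  (alpha + 1) 25/64 <= (8/5) powr alpha yields the claim.
*)
theory Submission
  imports Defs
begin

section \<open>Integrals on the real line\<close>

lemma nn_integral_halfline_inverse_sq_quadratic:
  fixes c :: real
  assumes c: "c > 0"
  shows "(\<integral>\<^sup>+x\<in>{0..}. ennreal (1 / (x^2 + c^2)^2) \<partial>lborel) = ennreal (pi / (4 * c^3))"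
proof -
  define F where "F x = x / (x^2 + c^2) / (2 * c^2) + arctan (x / c) / (2 * c^3)" for x
  have "(F has_real_derivative 1 / (x^2 + c^2)^2) (at x)" for x
  proof -
    define q where "q = x^2 + c^2"
    have q: "q > 0" using c by (simp add: q_def add_nonneg_pos)
    have "((\<lambda>x. x / (x^2 + c^2)) has_real_derivative (2 * c^2 - q) / q^2) (at x)"
      using q by (auto intro!: derivative_eq_intros simp: q_def divide_simps power2_eq_square)
    moreover have "((\<lambda>x. arctan (x / c)) has_real_derivative c / q) (at x)"
      using c q by (auto intro!: derivative_eq_intros simp: q_def divide_simps power2_eq_square)
    ultimately have "(F has_real_derivative (2 * c^2 - q) / q^2 / (2 * c^2) + c / q / (2 * c^3)) (at x)"
      unfolding F_def by (intro DERIV_add DERIV_cdivide)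
    moreover have "(2 * c^2 - q) / q^2 / (2 * c^2) + c / q / (2 * c^3) = 1 / q^2"
      using c q by (simp add: field_simps power2_eq_square power3_eq_cube)
    ultimately show ?thesis by (simp add: q_def)
  qed
  moreover have "(F \<longlongrightarrow> pi / (4 * c^3)) at_top"
  proof -
    have "((\<lambda>x. x / (x^2 + c^2) / (2 * c^2)) \<longlongrightarrow> 0) at_top"
      using c by real_asymp
    moreover have "((\<lambda>x. arctan (x / c)) \<longlongrightarrow> pi / 2) at_top"
      using c by (intro filterlim_compose[OF tendsto_arctan_at_top]) real_asymp
    ultimately have "(F \<longlongrightarrow> 0 + pi / 2 / (2 * c^3)) at_top"
      unfolding F_def using c by (intro tendsto_intros) auto
    then show ?thesis by simp
  qed
  ultimately have "(\<integral>\<^sup>+x\<in>{0..}. ennreal (1 / (x^2 + c^2)^2) \<partial>lborel) = pi / (4 * c^3) - F 0"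
    by (intro nn_integral_FTC_atLeast) auto
  then show ?thesis by (simp add: F_def)
qed

lemma nn_integral_inverse_sq_quadratic_le:
  fixes a c :: real
  assumes c: "c > 0"
  shows "(\<integral>\<^sup>+x. ennreal (1 / ((x - a)^2 + c^2)^2) \<partial>lborel) \<le> ennreal (pi / (2 * c^3))"
proof -
  define g where "g x = ennreal (1 / (x^2 + c^2)^2) * indicator {0..} x" for x
  have [measurable]: "g \<in> borel_measurable borel" unfolding g_def by measurable
  have "(\<integral>\<^sup>+x. ennreal (1 / ((x - a)^2 + c^2)^2) \<partial>lborel) = (\<integral>\<^sup>+x. ennreal (1 / (x^2 + c^2)^2) \<partial>lborel)"
    by (subst nn_integral_real_affine[of _ 1 a]) auto
  also have "\<dots> \<le> (\<integral>\<^sup>+x. g x + g (0 + (-1) * x) \<partial>lborel)"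
    by (intro nn_integral_mono) (auto simp: g_def indicator_def)
  also have "\<dots> = (\<integral>\<^sup>+x. g x \<partial>lborel) + (\<integral>\<^sup>+x. g (0 + (-1) * x) \<partial>lborel)"
    by (intro nn_integral_add) auto
  also have "(\<integral>\<^sup>+x. g (0 + (-1) * x) \<partial>lborel) = (\<integral>\<^sup>+x. g x \<partial>lborel)"
    using nn_integral_real_affine[of g "-1" 0] by simp
  also have "(\<integral>\<^sup>+x. g x \<partial>lborel) = ennreal (pi / (4 * c^3))"
    unfolding g_def using c by (rule nn_integral_halfline_inverse_sq_quadratic)
  also have "ennreal (pi / (4 * c^3)) + ennreal (pi / (4 * c^3)) = ennreal (pi / (2 * c^3))"
    using c by (simp flip: ennreal_plus)
  finally show ?thesis .
qed

lemma nn_integral_halfline_inverse_cube: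
  fixes b :: real
  assumes b: "b > 0"
  shows "(\<integral>\<^sup>+s\<in>{0..}. ennreal (pi / (2 * (s + b)^3)) \<partial>lborel) = ennreal (pi / (4 * b^2))"
proof -
  define F where "F s = - pi / (4 * (s + b)^2)" for s
  have "(F has_real_derivative pi / (2 * (s + b)^3)) (at s)" if "0 \<le> s" for s
  proof -
    have "s + b > 0" using that b by simp
    then show ?thesis unfolding F_def
      by (auto intro!: derivative_eq_intros simp: divide_simps eval_nat_numeral) (simp add: algebra_simps)
  qed
  moreover have "(F \<longlongrightarrow> 0) at_top"
    unfolding F_def using b by real_asymp
  ultimately have "(\<integral>\<^sup>+s\<in>{0..}. ennreal (pi / (2 * (s + b)^3)) \<partial>lborel) = 0 - F 0"
    using b by (intro nn_integral_FTC_atLeast) auto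
  then show ?thesis by (simp add: F_def)
qed

lemma nn_integral_Icc_powr_ratio:
  fixes b \<alpha> :: real
  assumes b: "b > 0" and \<alpha>: "\<alpha> > 0"
  shows "(\<integral>\<^sup>+s\<in>{0..b}. ennreal (s powr \<alpha> * (s + b) powr (-\<alpha>-2)) \<partial>lborel)
         = ennreal (1 / ((\<alpha> + 1) * 2 powr (\<alpha> + 1) * b))"
proof -
  define F where "F s = (s / (s + b)) powr (\<alpha> + 1) / ((\<alpha> + 1) * b)" for s
  have "continuous_on {0..b} F"
    unfolding F_def using b \<alpha>
    by (intro continuous_intros continuous_on_powr') (auto intro!: continuous_intros)
  moreover have "(F has_vector_derivative s powr \<alpha> * (s + b) powr (-\<alpha>-2)) (at s)"
    if "s \<in> {0<..<b}" for s
  proof -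
    have s: "s > 0" using that by simp
    have "((\<lambda>s. s / (s + b)) has_real_derivative b / (s + b)^2) (at s)"
      using s b by (auto intro!: derivative_eq_intros simp: divide_simps power2_eq_square)
    then have deriv: "(F has_real_derivative
        (\<alpha> + 1) * (s / (s + b)) powr (\<alpha> + 1 - 1) * (b / (s + b)^2) / ((\<alpha> + 1) * b)) (at s)"
      unfolding F_def using s b by (intro DERIV_cdivide DERIV_chain2[OF has_real_derivative_powr]) auto
    have "(s + b) powr (-\<alpha>-2) = inverse ((s + b) powr (\<alpha> + 2))"
      by (simp add: powr_minus [symmetric])
    then have e1: "(s + b) powr (-\<alpha>-2) = 1 / ((s + b) powr \<alpha> * (s + b)^2)"
      using s b by (simp add: powr_add divide_inverse flip: powr_numeral)
    have e2: "(s / (s + b)) powr (\<alpha> + 1 - 1) = s powr \<alpha> / (s + b) powr \<alpha>"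
      using s b by (simp add: powr_divide)
    have "(\<alpha> + 1) * (s / (s + b)) powr (\<alpha> + 1 - 1) * (b / (s + b)^2) / ((\<alpha> + 1) * b)
        = s powr \<alpha> * (s + b) powr (-\<alpha>-2)"
      unfolding e1 e2 using b \<alpha> by simp
    with deriv show ?thesis
      by (simp add: has_real_derivative_iff_has_vector_derivative)
  qed
  ultimately have "((\<lambda>s. s powr \<alpha> * (s + b) powr (-\<alpha>-2)) has_integral F b - F 0) {0..b}"
    using b by (intro fundamental_theorem_of_calculus_interior) auto
  moreover have "F b - F 0 = 1 / ((\<alpha> + 1) * 2 powr (\<alpha> + 1) * b)"
    using b \<alpha> by (simp add: F_def powr_divide)
  ultimately show ?thesis
    by (intro nn_integral_has_integral_lebesgue') auto
qed

lemma nn_integral_quadratic_powr_ge: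
  fixes a c \<beta> :: real
  assumes c: "c > 0" and \<beta>: "\<beta> \<ge> 0"
  shows "ennreal ((4/5) powr \<beta> * c powr (1 - 2 * \<beta>))
         \<le> (\<integral>\<^sup>+x. ennreal (((x - a)^2 + c^2) powr (-\<beta>)) \<partial>lborel)"
proof -
  define m where "m = (4/5) powr \<beta> * c powr (-2 * \<beta>)"
  have m: "m = (5/4 * c^2) powr (-\<beta>)"
    using c by (simp add: m_def powr_mult powr_minus_divide powr_divide powr_powr flip: powr_numeral)
  have "c powr (1 - 2 * \<beta>) = c * c powr (-2 * \<beta>)"
    using powr_add[of c 1 "-2 * \<beta>"] c by simp
  then have "ennreal ((4/5) powr \<beta> * c powr (1 - 2 * \<beta>)) = ennreal m * emeasure lborel {a - c/2 .. a + c/2}"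
    using c by (simp add: m_def ennreal_mult [symmetric] mult_ac)
  also have "\<dots> = (\<integral>\<^sup>+x. ennreal m * indicator {a - c/2 .. a + c/2} x \<partial>lborel)"
    by (simp add: nn_integral_cmult_indicator)
  also have "\<dots> \<le> (\<integral>\<^sup>+x. ennreal (((x - a)^2 + c^2) powr (-\<beta>)) \<partial>lborel)"
  proof (intro nn_integral_mono)
    fix x
    show "ennreal m * indicator {a - c/2 .. a + c/2} x \<le> ennreal (((x - a)^2 + c^2) powr (-\<beta>))"
    proof (cases "x \<in> {a - c/2 .. a + c/2}")
      case True
      then have "\<bar>x - a\<bar> \<le> c / 2" unfolding abs_le_iff by auto
      then have "(x - a)^2 \<le> (c / 2)^2"
        using power_mono[of "\<bar>x - a\<bar>" "c / 2" 2] by simp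
      then have "(x - a)^2 + c^2 \<le> 5/4 * c^2" by (simp add: power_divide)
      then have "m \<le> ((x - a)^2 + c^2) powr (-\<beta>)"
        unfolding m using c \<beta> by (intro powr_mono2') (auto intro: add_nonneg_pos)
      with True show ?thesis by (simp add: ennreal_leI)
    qed simp
  qed
  finally show ?thesis .
qed

section \<open>Integrals over the upper half plane\<close>

lemma lborel_complex_eq_distr:
  "(lborel :: complex measure) = distr (lborel \<Otimes>\<^sub>M lborel) borel (\<lambda>(x, s). Complex x s)"
proof (rule lborel_eqI)
  fix l u :: complex
  assume le: "\<And>b. b \<in> Basis \<Longrightarrow> l \<bullet> b \<le> u \<bullet> b"
  have m: "(\<lambda>(x, s). Complex x s) \<in> (lborel \<Otimes>\<^sub>M lborel :: (real \<times> real) measure) \<rightarrow>\<^sub>M borel"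
    unfolding lborel_prod measurable_lborel2 case_prod_unfold
    by (intro borel_measurable_continuous_onI continuous_intros)
  have "(\<lambda>(x, s). Complex x s) -` box l u \<inter> space (lborel \<Otimes>\<^sub>M lborel)
      = box (Re l) (Re u) \<times> box (Im l) (Im u)"
    by (auto simp: box_def Basis_complex_def space_pair_measure inner_complex_def)
  then show "emeasure (distr (lborel \<Otimes>\<^sub>M lborel) borel (\<lambda>(x, s). Complex x s)) (box l u)
      = (\<Prod>b\<in>Basis. (u - l) \<bullet> b)"
    using le[of 1] le[of \<i>]
    by (simp add: emeasure_distr[OF m] lborel.emeasure_pair_measure_Times Basis_complex_def
        inner_complex_def ennreal_mult[symmetric])
qed simp

lemma nn_integral_lborel_complex:
  assumes [measurable]: "h \<in> borel_measurable borel"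
  shows "(\<integral>\<^sup>+w. h w \<partial>lborel) = (\<integral>\<^sup>+s. (\<integral>\<^sup>+x. h (Complex x s) \<partial>lborel) \<partial>lborel)"
proof -
  have [measurable]: "(\<lambda>(x, s). Complex x s) \<in> (lborel \<Otimes>\<^sub>M lborel :: (real \<times> real) measure) \<rightarrow>\<^sub>M borel"
    unfolding lborel_prod measurable_lborel2 case_prod_unfold
    by (intro borel_measurable_continuous_onI continuous_intros)
  show ?thesis
    by (subst lborel_complex_eq_distr)
       (simp add: nn_integral_distr case_prod_unfold lborel_pair.nn_integral_snd[symmetric])
qed

lemma sets_borel_upper_half_plane [measurable]: "upper_half_plane \<in> sets borel"
  unfolding upper_half_plane_def by (intro borel_open open_halfspace_Im_gt)

lemma norm_diff_cnj_sq: "(cmod (w - cnj z))^2 = (Re w - Re z)^2 + (Im w + Im z)^2"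
  by (simp add: cmod_power2)

lemma nn_integral_upper_half_plane_inverse_pow4_le:
  fixes z :: complex
  assumes b: "Im z > 0"
  shows "(\<integral>\<^sup>+w\<in>upper_half_plane. ennreal (1 / (cmod (w - cnj z))^4) \<partial>lborel)
         \<le> ennreal (pi / (4 * (Im z)^2))"
proof -
  have "(\<integral>\<^sup>+w\<in>upper_half_plane. ennreal (1 / (cmod (w - cnj z))^4) \<partial>lborel)
     = (\<integral>\<^sup>+s. (\<integral>\<^sup>+x. ennreal (1 / (cmod (Complex x s - cnj z))^4)
          * indicator upper_half_plane (Complex x s) \<partial>lborel) \<partial>lborel)"
    by (rule nn_integral_lborel_complex) measurable
  also have "\<dots> \<le> (\<integral>\<^sup>+s\<in>{0..}. ennreal (pi / (2 * (s + Im z)^3)) \<partial>lborel)"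
  proof (intro nn_integral_mono)
    fix s :: real
    show "(\<integral>\<^sup>+x. ennreal (1 / (cmod (Complex x s - cnj z))^4)
            * indicator upper_half_plane (Complex x s) \<partial>lborel)
          \<le> ennreal (pi / (2 * (s + Im z)^3)) * indicator {0..} s"
    proof (cases "s > 0")
      case True
      have "(cmod (Complex x s - cnj z))^4 = ((cmod (Complex x s - cnj z))^2)^2" for x
        by simp
      then have "(cmod (Complex x s - cnj z))^4 = ((x - Re z)^2 + (s + Im z)^2)^2" for x
        by (simp only: norm_diff_cnj_sq complex.sel)
      then have "(\<integral>\<^sup>+x. ennreal (1 / (cmod (Complex x s - cnj z))^4)
            * indicator upper_half_plane (Complex x s) \<partial>lborel)
          = (\<integral>\<^sup>+x. ennreal (1 / ((x - Re z)^2 + (s + Im z)^2)^2) \<partial>lborel)"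
        using True by (simp add: upper_half_plane_def)
      also have "\<dots> \<le> ennreal (pi / (2 * (s + Im z)^3))"
        using True b by (intro nn_integral_inverse_sq_quadratic_le) simp
      finally show ?thesis using True by simp
    qed (simp add: upper_half_plane_def)
  qed
  also have "\<dots> = ennreal (pi / (4 * (Im z)^2))"
    using b by (rule nn_integral_halfline_inverse_cube)
  finally show ?thesis .
qed

lemma nn_integral_horizontal_line_kernel_ge:
  fixes z :: complex and \<alpha> s :: real
  assumes \<alpha>: "\<alpha> > 0" and s: "0 < s" "s \<le> Im z"
  shows "ennreal ((4/5) powr (\<alpha> + 2) / (2 * Im z) powr (\<alpha> + 1) * (s powr \<alpha> * (s + Im z) powr (-\<alpha>-2)))
    \<le> (\<integral>\<^sup>+x. ennreal (((cmod (Complex x s - cnj z))^2) powr (-(\<alpha> + 2)) * s powr \<alpha>) \<partial>lborel)"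
proof -
  define b where "b = Im z"
  have "(s + b) powr (-\<alpha>-2) / (2 * b) powr (\<alpha> + 1) \<le> (s + b) powr (-\<alpha>-2) / (s + b) powr (\<alpha> + 1)"
    using s \<alpha> by (intro divide_left_mono powr_mono2 mult_pos_pos) (auto simp: b_def)
  also have "\<dots> = (s + b) powr (1 - 2 * (\<alpha> + 2))"
    by (simp add: powr_diff [symmetric] algebra_simps)
  finally have "s powr \<alpha> * (4/5) powr (\<alpha> + 2) * ((s + b) powr (-\<alpha>-2) / (2 * b) powr (\<alpha> + 1))
      \<le> s powr \<alpha> * (4/5) powr (\<alpha> + 2) * (s + b) powr (1 - 2 * (\<alpha> + 2))"
    by (intro mult_left_mono) auto
  then have "ennreal ((4/5) powr (\<alpha> + 2) / (2 * b) powr (\<alpha> + 1) * (s powr \<alpha> * (s + b) powr (-\<alpha>-2)))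
      \<le> ennreal (s powr \<alpha> * ((4/5) powr (\<alpha> + 2) * (s + b) powr (1 - 2 * (\<alpha> + 2))))"
    by (intro ennreal_leI) (simp add: mult_ac)
  also have "\<dots> = ennreal (s powr \<alpha>) * ennreal ((4/5) powr (\<alpha> + 2) * (s + b) powr (1 - 2 * (\<alpha> + 2)))"
    by (simp add: ennreal_mult)
  also have "\<dots> \<le> ennreal (s powr \<alpha>) * (\<integral>\<^sup>+x. ennreal (((x - Re z)^2 + (s + b)^2) powr (-(\<alpha> + 2))) \<partial>lborel)"
    using s \<alpha> by (intro mult_left_mono nn_integral_quadratic_powr_ge) (auto simp: b_def)
  also have "\<dots> = (\<integral>\<^sup>+x. ennreal (((cmod (Complex x s - cnj z))^2) powr (-(\<alpha> + 2)) * s powr \<alpha>) \<partial>lborel)"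
    by (subst nn_integral_cmult [symmetric]) (auto simp: norm_diff_cnj_sq b_def ennreal_mult' mult.commute)
  finally show ?thesis by (simp add: b_def)
qed

text \<open>Only the region \<open>Im w \<le> Im z\<close>, \<open>\<bar>Re w - Re z\<bar> \<le> (Im w + Im z) / 2\<close> contributes to this bound.\<close>

lemma nn_integral_upper_half_plane_kernel_ge:
  fixes z :: complex and \<alpha> :: real
  assumes z: "Im z > 0" and \<alpha>: "\<alpha> > 0"
  shows "ennreal ((4/5) powr (\<alpha> + 2) / ((\<alpha> + 1) * 4 powr (\<alpha> + 1) * Im z powr (\<alpha> + 2)))
    \<le> (\<integral>\<^sup>+w\<in>upper_half_plane. ennreal (((cmod (w - cnj z))^2) powr (-(\<alpha> + 2)) * Im w powr \<alpha>) \<partial>lborel)"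
proof -
  define b where "b = Im z"
  have b: "b > 0" using z by (simp add: b_def)
  define K where "K = (4/5) powr (\<alpha> + 2) / (2 * b) powr (\<alpha> + 1)"
  have K: "K \<ge> 0" by (simp add: K_def)
  have "(2 * b) powr (\<alpha> + 1) * (2 powr (\<alpha> + 1) * b) = 4 powr (\<alpha> + 1) * b powr (\<alpha> + 2)"
    using b by (simp add: powr_mult powr_add mult_ac power2_eq_square flip: powr_mult [of 2 2])
  then have K_eq: "(4/5) powr (\<alpha> + 2) / ((\<alpha> + 1) * 4 powr (\<alpha> + 1) * b powr (\<alpha> + 2))
      = K * (1 / ((\<alpha> + 1) * 2 powr (\<alpha> + 1) * b))"
    by (simp add: K_def field_simps)
  have "ennreal ((4/5) powr (\<alpha> + 2) / ((\<alpha> + 1) * 4 powr (\<alpha> + 1) * b powr (\<alpha> + 2)))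
      = ennreal K * ennreal (1 / ((\<alpha> + 1) * 2 powr (\<alpha> + 1) * b))"
    unfolding K_eq using b \<alpha> by (intro ennreal_mult) (auto simp: K_def)
  also have "\<dots> = ennreal K * (\<integral>\<^sup>+s\<in>{0..b}. ennreal (s powr \<alpha> * (s + b) powr (-\<alpha>-2)) \<partial>lborel)"
    by (simp only: nn_integral_Icc_powr_ratio [OF b \<alpha>])
  also have "\<dots> = (\<integral>\<^sup>+s\<in>{0..b}. ennreal (K * (s powr \<alpha> * (s + b) powr (-\<alpha>-2))) \<partial>lborel)"
    using K by (subst nn_integral_cmult [symmetric]) (auto simp: ennreal_mult mult.assoc)
  also have "\<dots> \<le> (\<integral>\<^sup>+s. (\<integral>\<^sup>+x. ennreal (((cmod (Complex x s - cnj z))^2) powr (-(\<alpha> + 2))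
      * Im (Complex x s) powr \<alpha>) * indicator upper_half_plane (Complex x s) \<partial>lborel) \<partial>lborel)"
  proof (intro nn_integral_mono)
    fix s :: real
    show "ennreal (K * (s powr \<alpha> * (s + b) powr (-\<alpha>-2))) * indicator {0..b} s
      \<le> (\<integral>\<^sup>+x. ennreal (((cmod (Complex x s - cnj z))^2) powr (-(\<alpha> + 2))
          * Im (Complex x s) powr \<alpha>) * indicator upper_half_plane (Complex x s) \<partial>lborel)"
    proof (cases "0 < s \<and> s \<le> b")
      case True
      then show ?thesis
        using nn_integral_horizontal_line_kernel_ge[OF \<alpha>, of s z]
        by (simp add: K_def b_def upper_half_plane_def)
    next
      case False
      then have "s \<notin> {0..b} \<or> s = 0" by auto
      then show ?thesis by auto
    qed
  qed
  also have "\<dots> = (\<integral>\<^sup>+w\<in>upper_half_plane. ennreal (((cmod (w - cnj z))^2) powr (-(\<alpha> + 2)) * Im w powr \<alpha>) \<partial>lborel)"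
    by (rule nn_integral_lborel_complex [symmetric]) measurable
  finally show ?thesis by (simp add: b_def)
qed

section \<open>The test functions\<close>

definition negbinom_coeff :: "real \<Rightarrow> nat \<Rightarrow> real" where
  "negbinom_coeff \<alpha> n = (\<alpha> + real n - 1) gchoose n"

lemma negbinom_coeff_pos: "\<alpha> > 0 \<Longrightarrow> negbinom_coeff \<alpha> n > 0"
  unfolding negbinom_coeff_def gbinomial_prod_rev by (intro divide_pos_pos prod_pos) auto

lemma sums_negbinom_coeff:
  fixes t :: real
  assumes "\<bar>t\<bar> < 1"
  shows "(\<lambda>n. negbinom_coeff \<alpha> n * t^n) sums (1 - t) powr (-\<alpha>)"
proof -
  have "(\<lambda>n. ((-\<alpha>) gchoose n) * (-t)^n) sums (1 + -t) powr (-\<alpha>)"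
    using assms by (intro gen_binomial_real) simp
  moreover have "((-\<alpha>) gchoose n) * (-t)^n = ((-1)^n * (-1)^n) * (negbinom_coeff \<alpha> n * t^n)" for n
    by (simp only: negbinom_coeff_def gbinomial_minus power_minus [of t] ac_simps)
  ultimately show ?thesis by simp
qed

lemma suminf_ennreal_negbinom_coeff:
  fixes t :: real
  assumes "\<alpha> > 0" and "0 \<le> t" and "t < 1"
  shows "(\<Sum>n. ennreal (negbinom_coeff \<alpha> n * t^n)) = ennreal ((1 - t) powr (-\<alpha>))"
  using assms negbinom_coeff_pos[OF assms(1)]
  by (intro suminf_ennreal_eq sums_negbinom_coeff) (auto simp: less_imp_le)

definition blaschke_factor :: "complex \<Rightarrow> complex \<Rightarrow> complex" where
  "blaschke_factor z w = (w - z) / (w - cnj z)"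

text \<open>Up to a constant factor, the reproducing kernel of the weighted Bergman space at \<open>z\<close>.\<close>

definition bergman_kernel :: "real \<Rightarrow> complex \<Rightarrow> complex \<Rightarrow> complex" where
  "bergman_kernel \<alpha> z w = (w - cnj z) powr complex_of_real (-(\<alpha> + 2))"

definition blaschke_kernel :: "real \<Rightarrow> complex \<Rightarrow> nat \<Rightarrow> complex \<Rightarrow> complex" where
  "blaschke_kernel \<alpha> z n w = blaschke_factor z w ^ n * bergman_kernel \<alpha> z w"

lemma blaschke_kernel_0: "blaschke_kernel \<alpha> z 0 = bergman_kernel \<alpha> z"
  by (simp add: blaschke_kernel_def fun_eq_iff)

lemma pseudohyp_eq_norm_blaschke_factor: "pseudohyp z w = cmod (blaschke_factor z w)"
proof -
  have "cmod (z - cnj w) = cmod (w - cnj z)"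
    by (metis complex_cnj_cnj complex_cnj_diff complex_mod_cnj norm_minus_commute)
  then show ?thesis
    by (simp add: pseudohyp_def blaschke_factor_def norm_divide norm_minus_commute)
qed

lemma Im_diff_cnj_pos: "z \<in> upper_half_plane \<Longrightarrow> w \<in> upper_half_plane \<Longrightarrow> Im (w - cnj z) > 0"
  by (simp add: upper_half_plane_def)

lemma norm_blaschke_factor_sq:
  assumes "z \<in> upper_half_plane" "w \<in> upper_half_plane"
  shows "(cmod (blaschke_factor z w))^2 = 1 - 4 * Im w * Im z / (cmod (w - cnj z))^2"
proof -
  have "(cmod (w - cnj z))^2 > 0" using Im_diff_cnj_pos[OF assms] by auto
  moreover have "(cmod (w - z))^2 = (cmod (w - cnj z))^2 - 4 * Im w * Im z"
    by (simp only: cmod_power2) (simp add: power2_eq_square algebra_simps)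
  ultimately show ?thesis
    by (simp add: blaschke_factor_def norm_divide power_divide field_simps)
qed

lemma norm_blaschke_factor_less_1:
  assumes "z \<in> upper_half_plane" "w \<in> upper_half_plane"
  shows "cmod (blaschke_factor z w) < 1"
proof -
  have "w - cnj z \<noteq> 0" using Im_diff_cnj_pos[OF assms] by auto
  then have "4 * Im w * Im z / (cmod (w - cnj z))^2 > 0"
    using assms by (auto simp: upper_half_plane_def)
  then have "(cmod (blaschke_factor z w))^2 < 1^2"
    using norm_blaschke_factor_sq[OF assms] by simp
  then show ?thesis by (rule power_less_imp_less_base) simp
qed

lemma norm_bergman_kernel_sq:
  assumes "z \<in> upper_half_plane" "w \<in> upper_half_plane"
  shows "(cmod (bergman_kernel \<alpha> z w))^2 = ((cmod (w - cnj z))^2) powr (-(\<alpha> + 2))"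
proof -
  have "w - cnj z \<noteq> 0" using Im_diff_cnj_pos[OF assms] by auto
  then have "cmod (bergman_kernel \<alpha> z w) = cmod (w - cnj z) powr (-(\<alpha> + 2))"
    unfolding bergman_kernel_def by (subst norm_powr_real_powr') auto
  then show ?thesis by (simp add: power2_eq_square powr_mult)
qed

lemma holomorphic_on_bergman_kernel:
  assumes "z \<in> upper_half_plane"
  shows "bergman_kernel \<alpha> z holomorphic_on upper_half_plane"
  unfolding bergman_kernel_def
proof (intro holomorphic_on_powr holomorphic_intros)
  fix w assume "w \<in> upper_half_plane"
  then have "Im (w - cnj z) > 0" by (rule Im_diff_cnj_pos[OF assms])
  then show "w - cnj z \<notin> \<real>\<^sub>\<le>\<^sub>0" by (auto simp: complex_nonpos_Reals_iff)
qed

lemma holomorphic_on_blaschke_kernel: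
  assumes "z \<in> upper_half_plane"
  shows "blaschke_kernel \<alpha> z n holomorphic_on upper_half_plane"
proof -
  have "w - cnj z \<noteq> 0" if "w \<in> upper_half_plane" for w
    using Im_diff_cnj_pos[OF assms that] by auto
  then have "blaschke_factor z holomorphic_on upper_half_plane"
    unfolding blaschke_factor_def by (intro holomorphic_intros) auto
  then show ?thesis
    unfolding blaschke_kernel_def [abs_def]
    by (intro holomorphic_intros holomorphic_on_bergman_kernel assms)
qed

lemma borel_measurable_bergman_integrand:
  assumes "continuous_on upper_half_plane F"
  shows "(\<lambda>w. ennreal ((cmod (F w))^2 * Im w powr \<alpha>) * indicator upper_half_plane w) \<in> borel_measurable borel"
proof -
  have "continuous_on upper_half_plane (\<lambda>w. (cmod (F w))^2 * Im w powr \<alpha>)"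
    using assms by (intro continuous_intros) (auto simp: upper_half_plane_def)
  then have "(\<lambda>w. indicator upper_half_plane w *\<^sub>R ((cmod (F w))^2 * Im w powr \<alpha>)) \<in> borel_measurable borel"
    by (intro borel_measurable_continuous_on_indicator) measurable
  then show ?thesis
    by (rule measurable_compose[OF _ measurable_ennreal, THEN measurable_cong [THEN iffD1, rotated]])
      (auto simp: indicator_def)
qed

lemma powr_ratio_identity:
  fixes s b Q \<alpha> :: real
  assumes "s > 0" "b > 0" "Q > 0"
  shows "(4 * s * b / Q) powr (-\<alpha>) * (Q powr (-(\<alpha> + 2)) * s powr \<alpha>) = 1 / ((4 * b) powr \<alpha> * Q^2)"
proof -
  have "(4 * s * b / Q) powr (-\<alpha>) = Q powr \<alpha> / ((4 * b) powr \<alpha> * s powr \<alpha>)"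
    using assms by (simp add: powr_minus_divide powr_divide powr_mult mult_ac)
  then have "(4 * s * b / Q) powr (-\<alpha>) * (Q powr (-(\<alpha> + 2)) * s powr \<alpha>)
      = Q powr \<alpha> * Q powr (-(\<alpha> + 2)) / (4 * b) powr \<alpha>"
    using assms by (simp add: field_simps)
  also have "Q powr \<alpha> * Q powr (-(\<alpha> + 2)) = 1 / Q^2"
    using assms by (simp add: powr_add [symmetric] powr_minus_divide flip: powr_numeral)
  finally show ?thesis by simp
qed

lemma suminf_negbinom_blaschke_kernel:
  assumes \<alpha>: "\<alpha> > 0" and z: "z \<in> upper_half_plane" and w: "w \<in> upper_half_plane"
  shows "(\<Sum>n. ennreal (negbinom_coeff \<alpha> n) * ennreal ((cmod (blaschke_kernel \<alpha> z n w))^2 * Im w powr \<alpha>))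
    = ennreal (1 / ((4 * Im z) powr \<alpha> * (cmod (w - cnj z))^4))"
proof -
  define t where "t = (cmod (blaschke_factor z w))^2"
  define Q where "Q = (cmod (w - cnj z))^2"
  define K where "K = Q powr (-(\<alpha> + 2)) * Im w powr \<alpha>"
  have Q: "Q > 0" using Im_diff_cnj_pos[OF z w] by (auto simp: Q_def)
  have t: "0 \<le> t" "t < 1"
    using norm_blaschke_factor_less_1[OF z w] by (auto simp: t_def abs_square_less_1)
  have "(cmod (blaschke_kernel \<alpha> z n w))^2 = t^n * Q powr (-(\<alpha> + 2))" for n
    by (simp add: blaschke_kernel_def norm_mult norm_power power_mult_distrib t_def Q_def
        norm_bergman_kernel_sq[OF z w] mult.commute [of n] flip: power_mult)
  then have "ennreal (negbinom_coeff \<alpha> n) * ennreal ((cmod (blaschke_kernel \<alpha> z n w))^2 * Im w powr \<alpha>)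
      = ennreal K * ennreal (negbinom_coeff \<alpha> n * t^n)" for n
    using negbinom_coeff_pos[OF \<alpha>, of n] t by (simp add: K_def ennreal_mult mult_ac)
  then have "(\<Sum>n. ennreal (negbinom_coeff \<alpha> n) * ennreal ((cmod (blaschke_kernel \<alpha> z n w))^2 * Im w powr \<alpha>))
      = ennreal K * ennreal ((1 - t) powr (-\<alpha>))"
    using suminf_ennreal_negbinom_coeff[OF \<alpha> t] by simp
  also have "1 - t = 4 * Im w * Im z / Q"
    using norm_blaschke_factor_sq[OF z w] by (simp add: t_def Q_def)
  also have "ennreal K * ennreal ((4 * Im w * Im z / Q) powr (-\<alpha>)) = ennreal (1 / ((4 * Im z) powr \<alpha> * Q^2))"
    using z w Q powr_ratio_identity[of "Im w" "Im z" Q \<alpha>]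
    by (simp add: K_def upper_half_plane_def mult_ac flip: ennreal_mult)
  finally show ?thesis by (simp add: Q_def flip: power_mult)
qed

lemma suminf_bergman_norm2_blaschke_kernel_le:
  assumes \<alpha>: "\<alpha> > 0" and z: "z \<in> upper_half_plane"
  shows "(\<Sum>n. ennreal (negbinom_coeff \<alpha> n) * bergman_norm2 \<alpha> (blaschke_kernel \<alpha> z n))
    \<le> ennreal (pi / (4 powr (\<alpha> + 1) * Im z powr (\<alpha> + 2)))"
proof -
  define g where "g n = (\<lambda>w. ennreal ((cmod (blaschke_kernel \<alpha> z n w))^2 * Im w powr \<alpha>)
    * indicator upper_half_plane w)" for n
  have g_meas [measurable]: "g n \<in> borel_measurable lborel" for n
    unfolding g_def measurable_lborel2 using holomorphic_on_blaschke_kernel[OF z]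
    by (intro borel_measurable_bergman_integrand holomorphic_on_imp_continuous_on)
  have b: "Im z > 0" using z by (simp add: upper_half_plane_def)
  have "(\<Sum>n. ennreal (negbinom_coeff \<alpha> n) * bergman_norm2 \<alpha> (blaschke_kernel \<alpha> z n))
      = (\<Sum>n. \<integral>\<^sup>+w. ennreal (negbinom_coeff \<alpha> n) * g n w \<partial>lborel)"
    using nn_integral_cmult [OF g_meas] by (simp add: bergman_norm2_def g_def)
  also have "\<dots> = (\<integral>\<^sup>+w. (\<Sum>n. ennreal (negbinom_coeff \<alpha> n) * g n w) \<partial>lborel)"
    by (intro nn_integral_suminf [symmetric]) measurable
  also have "\<dots> = (\<integral>\<^sup>+w. ennreal (1 / (4 * Im z) powr \<alpha>) *
      (ennreal (1 / (cmod (w - cnj z))^4) * indicator upper_half_plane w) \<partial>lborel)"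
    by (intro nn_integral_cong)
      (auto simp: g_def suminf_negbinom_blaschke_kernel[OF \<alpha> z] ennreal_mult [symmetric] indicator_def)
  also have "\<dots> = ennreal (1 / (4 * Im z) powr \<alpha>) *
      (\<integral>\<^sup>+w\<in>upper_half_plane. ennreal (1 / (cmod (w - cnj z))^4) \<partial>lborel)"
    by (intro nn_integral_cmult) measurable
  also have "\<dots> \<le> ennreal (1 / (4 * Im z) powr \<alpha>) * ennreal (pi / (4 * (Im z)^2))"
    using b by (intro mult_left_mono nn_integral_upper_half_plane_inverse_pow4_le) auto
  also have "\<dots> = ennreal (pi / (4 powr (\<alpha> + 1) * Im z powr (\<alpha> + 2)))"
    using b by (simp add: powr_mult powr_add power2_eq_square mult_ac flip: ennreal_mult)
  finally show ?thesis .
qed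

lemma blaschke_kernel_in_bergman_space:
  assumes \<alpha>: "\<alpha> > 0" and z: "z \<in> upper_half_plane"
  shows "blaschke_kernel \<alpha> z n \<in> bergman_space \<alpha>"
proof -
  have "(\<Sum>n. ennreal (negbinom_coeff \<alpha> n) * bergman_norm2 \<alpha> (blaschke_kernel \<alpha> z n)) < \<infinity>"
    using suminf_bergman_norm2_blaschke_kernel_le[OF \<alpha> z] by (rule le_less_trans) simp
  then have "ennreal (negbinom_coeff \<alpha> n) * bergman_norm2 \<alpha> (blaschke_kernel \<alpha> z n) < \<infinity>"
    by (rule ennreal_suminf_lessD)
  then have "bergman_norm2 \<alpha> (blaschke_kernel \<alpha> z n) < \<infinity>"
    using negbinom_coeff_pos[OF \<alpha>, of n] by (auto simp: ennreal_mult_less_top)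
  then show ?thesis
    using holomorphic_on_blaschke_kernel[OF z] by (simp add: bergman_space_def)
qed

lemma bergman_norm2_bergman_kernel_ge:
  assumes \<alpha>: "\<alpha> > 0" and z: "z \<in> upper_half_plane"
  shows "ennreal ((4/5) powr (\<alpha> + 2) / ((\<alpha> + 1) * 4 powr (\<alpha> + 1) * Im z powr (\<alpha> + 2)))
    \<le> bergman_norm2 \<alpha> (bergman_kernel \<alpha> z)"
proof -
  have "bergman_norm2 \<alpha> (bergman_kernel \<alpha> z)
      = (\<integral>\<^sup>+w\<in>upper_half_plane. ennreal (((cmod (w - cnj z))^2) powr (-(\<alpha> + 2)) * Im w powr \<alpha>) \<partial>lborel)"
    unfolding bergman_norm2_def
    by (intro nn_integral_cong) (simp add: norm_bergman_kernel_sq [OF z] indicator_def)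
  moreover have "Im z > 0" using z by (simp add: upper_half_plane_def)
  ultimately show ?thesis
    using nn_integral_upper_half_plane_kernel_ge[OF _ \<alpha>] by simp
qed

section \<open>The sampling estimate\<close>

lemma sets_pdisc [measurable]: "pdisc R z \<in> sets borel"
proof -
  have [measurable]: "cnj \<in> borel_measurable borel"
    by (intro borel_measurable_continuous_onI continuous_intros)
  show ?thesis unfolding pdisc_def pseudohyp_def by measurable
qed

lemma weighted_mu_integral_mult_ge:
  assumes \<mu>: "sets \<mu> = sets borel" and F: "continuous_on upper_half_plane F"
    and r: "r \<ge> 0" and h: "AE w in \<mu>. w \<in> upper_half_plane \<longrightarrow> r \<le> cmod (h w)"
  shows "ennreal (r^2) * weighted_mu_integral \<mu> \<alpha> F \<le> weighted_mu_integral \<mu> \<alpha> (\<lambda>w. h w * F w)"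
proof -
  have "(\<lambda>w. ennreal ((cmod (F w))^2 * Im w powr \<alpha>) * indicator upper_half_plane w) \<in> borel_measurable \<mu>"
    using borel_measurable_bergman_integrand[OF F] by (simp add: measurable_cong_sets[OF \<mu> refl])
  then have "ennreal (r^2) * weighted_mu_integral \<mu> \<alpha> F
      = (\<integral>\<^sup>+w. ennreal (r^2) * (ennreal ((cmod (F w))^2 * Im w powr \<alpha>) * indicator upper_half_plane w) \<partial>\<mu>)"
    unfolding weighted_mu_integral_def by (rule nn_integral_cmult [symmetric])
  also have "\<dots> \<le> weighted_mu_integral \<mu> \<alpha> (\<lambda>w. h w * F w)"
    unfolding weighted_mu_integral_def
  proof (intro nn_integral_mono_AE, use h in eventually_elim)
    fix w assume hw: "w \<in> upper_half_plane \<longrightarrow> r \<le> cmod (h w)"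
    show "ennreal (r^2) * (ennreal ((cmod (F w))^2 * Im w powr \<alpha>) * indicator upper_half_plane w)
        \<le> ennreal ((cmod (h w * F w))^2 * Im w powr \<alpha>) * indicator upper_half_plane w"
    proof (cases "w \<in> upper_half_plane")
      case True
      then have "r^2 \<le> (cmod (h w))^2" using hw r by (intro power_mono) auto
      then have "r^2 * ((cmod (F w))^2 * Im w powr \<alpha>) \<le> (cmod (h w * F w))^2 * Im w powr \<alpha>"
        by (simp add: norm_mult power_mult_distrib mult_right_mono mult.assoc)
      with True r show ?thesis by (simp add: ennreal_leI flip: ennreal_mult)
    qed simp
  qed
  finally show ?thesis .
qed

lemma bergman_kernel_sampling_le:
  fixes \<mu> :: "complex measure"
  assumes \<alpha>: "\<alpha> > 0" and \<mu>: "sets \<mu> = sets borel"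
    and samp: "\<forall>F \<in> bergman_space \<alpha>.
           ennreal A * bergman_norm2 \<alpha> F \<le> weighted_mu_integral \<mu> \<alpha> F \<and>
           weighted_mu_integral \<mu> \<alpha> F \<le> ennreal B * bergman_norm2 \<alpha> F"
    and R: "0 \<le> R" "R < 1" and z: "z \<in> upper_half_plane"
    and hole: "emeasure \<mu> (pdisc R z) = 0"
  shows "ennreal ((1 - R^2) powr (-\<alpha>)) * (ennreal A * bergman_norm2 \<alpha> (bergman_kernel \<alpha> z))
    \<le> ennreal B * ennreal (pi / (4 powr (\<alpha> + 1) * Im z powr (\<alpha> + 2)))"
proof -
  define N where "N = ennreal A * bergman_norm2 \<alpha> (bergman_kernel \<alpha> z)"
  have "AE w in \<mu>. w \<notin> pdisc R z"
    using hole \<mu> by (intro AE_not_in) (simp add: null_sets_def)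
  then have AE: "AE w in \<mu>. w \<in> upper_half_plane \<longrightarrow> R^n \<le> cmod (blaschke_factor z w ^ n)" for n
    by eventually_elim
      (auto simp: pdisc_def pseudohyp_eq_norm_blaschke_factor norm_power R intro: power_mono)
  have step: "ennreal ((R^2)^n) * N \<le> ennreal B * bergman_norm2 \<alpha> (blaschke_kernel \<alpha> z n)" for n
  proof -
    have "N \<le> weighted_mu_integral \<mu> \<alpha> (bergman_kernel \<alpha> z)"
      using samp blaschke_kernel_in_bergman_space[OF \<alpha> z, of 0] by (simp add: N_def blaschke_kernel_0)
    then have "ennreal ((R^n)^2) * N \<le> ennreal ((R^n)^2) * weighted_mu_integral \<mu> \<alpha> (bergman_kernel \<alpha> z)"
      by (rule mult_left_mono) simp
    also have "\<dots> \<le> weighted_mu_integral \<mu> \<alpha> (\<lambda>w. blaschke_factor z w ^ n * bergman_kernel \<alpha> z w)"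
      using holomorphic_on_bergman_kernel[OF z] R
      by (intro weighted_mu_integral_mult_ge[OF \<mu> _ _ AE] holomorphic_on_imp_continuous_on) auto
    also have "\<dots> \<le> ennreal B * bergman_norm2 \<alpha> (blaschke_kernel \<alpha> z n)"
      using samp blaschke_kernel_in_bergman_space[OF \<alpha> z, of n]
      by (simp add: blaschke_kernel_def [abs_def])
    finally show ?thesis by (simp flip: power_mult add: mult.commute)
  qed
  have "R^2 < 1" using R by (simp add: power_less_one_iff)
  then have "ennreal ((1 - R^2) powr (-\<alpha>)) * N = (\<Sum>n. ennreal (negbinom_coeff \<alpha> n) * (ennreal ((R^2)^n) * N))"
    using R suminf_ennreal_negbinom_coeff[OF \<alpha>, of "R^2"]
    by (simp add: negbinom_coeff_pos[OF \<alpha>, THEN less_imp_le] ennreal_mult flip: mult.assoc)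
  also have "\<dots> \<le> (\<Sum>n. ennreal (negbinom_coeff \<alpha> n) * (ennreal B * bergman_norm2 \<alpha> (blaschke_kernel \<alpha> z n)))"
    by (intro suminf_le mult_left_mono step summableI) simp
  also have "\<dots> = ennreal B * (\<Sum>n. ennreal (negbinom_coeff \<alpha> n) * bergman_norm2 \<alpha> (blaschke_kernel \<alpha> z n))"
    by (simp add: mult.left_commute [of _ "ennreal B"])
  also have "\<dots> \<le> ennreal B * ennreal (pi / (4 powr (\<alpha> + 1) * Im z powr (\<alpha> + 2)))"
    by (intro mult_left_mono suminf_bergman_norm2_blaschke_kernel_le \<alpha> z) simp
  finally show ?thesis by (simp add: N_def)
qed

lemma ln_8_5_ge: "5/12 \<le> ln (8/5 :: real)"
proof -
  have ln_ge: "1 - 1/x \<le> ln x" if "x > 0" for x :: real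
    using ln_le_minus_one[of "1/x"] that by (simp add: ln_div)
  have "ln (8/5 :: real) = ln (4/3) + ln (6/5)"
    using ln_mult[of "4/3 :: real" "6/5"] by simp
  also have "\<dots> \<ge> (1 - 1/(4/3)) + (1 - 1/(6/5))"
    by (intro add_mono ln_ge) auto
  finally show ?thesis by simp
qed

lemma powr_8_5_ge:
  fixes \<alpha> :: real
  assumes "\<alpha> \<ge> 0"
  shows "(\<alpha> + 1) * 25/64 \<le> (8/5) powr \<alpha>"
proof -
  have "(\<alpha> + 1) * 25/64 \<le> 1 + \<alpha> * (5/12)"
    using assms by simp
  also have "\<dots> \<le> 1 + \<alpha> * ln (8/5)"
    using ln_8_5_ge assms by (intro add_left_mono mult_left_mono) auto
  also have "\<dots> \<le> exp (\<alpha> * ln (8/5))" by (rule exp_ge_add_one_self)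
  also have "\<dots> = (8/5) powr \<alpha>" by (simp add: powr_def)
  finally show ?thesis .
qed

lemma kernel_constant_le:
  fixes \<alpha> :: real
  assumes "\<alpha> \<ge> 0"
  shows "(\<alpha> + 1) * (5/4) powr (\<alpha> + 2) * 2 powr \<alpha> \<le> 4 powr (\<alpha> + 1)"
proof -
  have e1: "(5/4 :: real) powr (\<alpha> + 2) = (5/4) powr \<alpha> * (25/16)"
    by (simp add: powr_add powr_numeral power2_eq_square)
  have e2: "(5/4 :: real) powr \<alpha> * 2 powr \<alpha> = (5/2) powr \<alpha>"
    by (simp add: powr_mult [symmetric])
  have "(\<alpha> + 1) * (5/4) powr (\<alpha> + 2) * 2 powr \<alpha> = ((\<alpha> + 1) * 25/64) * 4 * (5/2) powr \<alpha>"
    unfolding e1 e2 [symmetric] by (simp add: field_simps)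
  also have "\<dots> \<le> (8/5) powr \<alpha> * 4 * (5/2) powr \<alpha>"
    using powr_8_5_ge[OF assms] by (intro mult_right_mono) auto
  also have "\<dots> = 4 powr (\<alpha> + 1)"
    by (simp add: powr_add powr_mult [symmetric])
  finally show ?thesis .
qed

lemma sampling_ratio_le:
  fixes \<alpha> A B R b \<nu> :: real
  assumes \<alpha>: "\<alpha> > 0" and A: "A \<ge> 0" and B: "B > 0" and R: "0 \<le> R" "R < 1" and b: "b > 0"
    and low: "(4/5) powr (\<alpha> + 2) / ((\<alpha> + 1) * 4 powr (\<alpha> + 1) * b powr (\<alpha> + 2)) \<le> \<nu>"
    and up: "(1 - R^2) powr (-\<alpha>) * A * \<nu> \<le> B * (pi / (4 powr (\<alpha> + 1) * b powr (\<alpha> + 2)))"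
  shows "A / B \<le> 4 powr (\<alpha> + 1) * pi * (1 - R) powr \<alpha>"
proof -
  define C where "C = 4 powr (\<alpha> + 1) * b powr (\<alpha> + 2)"
  define P where "P = (1 - R^2) powr \<alpha>"
  define Q where "Q = (4/5) powr (\<alpha> + 2)"
  define D where "D = (\<alpha> + 1) * C"
  have "R^2 < 1" using R by (simp add: power_less_one_iff)
  then have C: "C > 0" and P: "P > 0" and Q: "Q > 0" and D: "D > 0"
    using b \<alpha> by (simp_all add: C_def P_def Q_def D_def)
  have "(1 / P) * A * (Q / D) \<le> B * (pi / C)"
    using mult_left_mono[OF low, of "(1 - R^2) powr (-\<alpha>) * A"] up A
    by (simp add: C_def P_def Q_def D_def powr_minus_divide mult.assoc)
  then have "A * Q \<le> B * pi * (D / C) * P"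
    using C P D by (simp add: field_simps)
  then have "A * Q \<le> B * pi * (\<alpha> + 1) * P"
    using C by (simp add: D_def)
  then have "A \<le> B * pi * ((\<alpha> + 1) * (5/4) powr (\<alpha> + 2) * P)"
    using Q by (simp add: Q_def field_simps powr_divide)
  also have "\<dots> \<le> B * pi * ((\<alpha> + 1) * (5/4) powr (\<alpha> + 2) * (2 powr \<alpha> * (1 - R) powr \<alpha>))"
  proof -
    have "0 \<le> (1 - R)^2" by simp
    then have "1 - R^2 \<le> 2 * (1 - R)" by (simp add: power2_eq_square algebra_simps)
    then have "P \<le> (2 * (1 - R)) powr \<alpha>"
      unfolding P_def using R \<alpha> \<open>R^2 < 1\<close> by (intro powr_mono2) auto
    also have "\<dots> = 2 powr \<alpha> * (1 - R) powr \<alpha>"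
      by (rule powr_mult)
    finally show ?thesis
      using B \<alpha> by (simp add: mult_left_mono)
  qed
  also have "\<dots> \<le> B * pi * (4 powr (\<alpha> + 1) * (1 - R) powr \<alpha>)"
    using kernel_constant_le[of \<alpha>] B \<alpha>
    by (intro mult_left_mono) (auto simp: mult.assoc [symmetric] intro: mult_right_mono)
  finally show ?thesis
    using B by (simp add: divide_le_eq mult_ac)
qed

lemma radius_bound_of_ratio:
  fixes \<alpha> X R :: real
  assumes \<alpha>: "\<alpha> > 0" and X: "X \<ge> 0" and R: "R < 1"
    and ratio: "X \<le> 4 powr (\<alpha> + 1) * pi * (1 - R) powr \<alpha>"
  shows "R \<le> 1 - ((1 / (4 powr (\<alpha> + 1) * pi)) * X) powr (1 / \<alpha>)"
proof -
  have "(1 / (4 powr (\<alpha> + 1) * pi)) * X \<le> (1 - R) powr \<alpha>"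
    using ratio by (simp add: field_simps)
  then have "((1 / (4 powr (\<alpha> + 1) * pi)) * X) powr (1 / \<alpha>) \<le> ((1 - R) powr \<alpha>) powr (1 / \<alpha>)"
    using X \<alpha> by (intro powr_mono2) auto
  also have "\<dots> = 1 - R"
    using R \<alpha> by (simp add: powr_powr)
  finally show ?thesis by simp
qed

theorem corollary1:
  fixes \<alpha> A B R :: real and \<mu> :: "complex measure" and z :: complex
  assumes "\<alpha> > 0"
    and "sets \<mu> = sets borel"
    and "A > 0" and "B > 0"
    and "\<forall>F \<in> bergman_space \<alpha>.
           ennreal A * bergman_norm2 \<alpha> F \<le> weighted_mu_integral \<mu> \<alpha> F \<and>
           weighted_mu_integral \<mu> \<alpha> F \<le> ennreal B * bergman_norm2 \<alpha> F"
    and "0 < R" and "R < 1"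
    and "z \<in> upper_half_plane"
    and "emeasure \<mu> (pdisc R z) = 0"
  shows "R \<le> 1 - ((1 / (4 powr (\<alpha> + 1) * pi)) * (A / B)) powr (1 / \<alpha>)"
proof -
  note \<alpha> = \<open>\<alpha> > 0\<close> and z = \<open>z \<in> upper_half_plane\<close> and samp = assms(5)
  obtain \<nu> where \<nu>: "bergman_norm2 \<alpha> (bergman_kernel \<alpha> z) = ennreal \<nu>" "\<nu> \<ge> 0"
    using blaschke_kernel_in_bergman_space[OF \<alpha> z, of 0]
    by (cases "bergman_norm2 \<alpha> (bergman_kernel \<alpha> z)") (auto simp: bergman_space_def blaschke_kernel_0)
  have "(4/5) powr (\<alpha> + 2) / ((\<alpha> + 1) * 4 powr (\<alpha> + 1) * Im z powr (\<alpha> + 2)) \<le> \<nu>"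
    using bergman_norm2_bergman_kernel_ge[OF \<alpha> z] \<nu> by (simp add: ennreal_le_iff)
  moreover have "(1 - R^2) powr (-\<alpha>) * A * \<nu> \<le> B * (pi / (4 powr (\<alpha> + 1) * Im z powr (\<alpha> + 2)))"
    using bergman_kernel_sampling_le[OF \<alpha> \<open>sets \<mu> = sets borel\<close> samp _ \<open>R < 1\<close> z
        \<open>emeasure \<mu> (pdisc R z) = 0\<close>] \<nu> \<open>A > 0\<close> \<open>B > 0\<close> \<open>0 < R\<close>
    by (simp add: ennreal_mult' [symmetric] ennreal_le_iff)
  ultimately have "A / B \<le> 4 powr (\<alpha> + 1) * pi * (1 - R) powr \<alpha>"
    using z \<open>A > 0\<close> \<open>B > 0\<close> \<open>0 < R\<close> \<open>R < 1\<close>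
    by (intro sampling_ratio_le[OF \<alpha>]) (auto simp: upper_half_plane_def)
  then show ?thesis
    using \<open>A > 0\<close> \<open>B > 0\<close> \<open>R < 1\<close> by (intro radius_bound_of_ratio[OF \<alpha>]) auto
qed

end
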